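(* There exist constants $\underline{c}>0$ and $\overline{c}>0$ such that $$\underline{c}\,\|\widetilde W\|_{L^2}^2\le\mathcal{L}_\#(W)\le\overline{c}\,\|\widetilde W\|_{L^2}^2$$ for all $W\in\mathcal{C}_0$, where $\widetilde W=W_{\rm sh}-W$.
   Context: Let $\Phi:\mathbb{R}\to\mathbb{R}$ be twice continuously differentiable on $[-1,1]$ with: $\Phi'(-1)=-1$, $\Phi'(1)=1$; $\Phi''\ge0$ on $[-1,1]$; $\Phi(-1)=\Phi(1)$; $\Phi''(-1)<1$, $\Phi''(1)<1$; and $g_\Phi(w):=\int_{-1}^w(v-\Phi'(v))\,dv>0$ for all $w\in(-1,1)$. $W_{\rm sh}(\varphi)=\mathrm{sgn}(\varphi)$; $\mathcal{H}=\{W\text{ measurable}: W_{\rm sh}-W\in L^2(\mathbb{R})\}$; $\mathcal{L}_\#(W)=\int_{\mathbb{R}}g_\Phi(W(\varphi))\,d\varphi$. $\mathcal{C}$ is the set of $W\in\mathcal{H}$ that are a.e. equal to a nondecreasing function with $W(\varphi)\to\pm1$ as $\varphi\to\pm\infty$; $\mathcal{C}_0$ is the set of $W\in\mathcal{C}$ with $0\le W\le1$ a.e. on $[0,\infty)$ and $-1\le W\le0$ a.e. on $(-\infty,0]$. *)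

theory Defs
  imports "HOL-Analysis.Analysis"
begin

definition Wsh :: "real \<Rightarrow> real" where
  "Wsh \<phi> = sgn \<phi>"

definition in_H :: "(real \<Rightarrow> real) \<Rightarrow> bool" where
  "in_H W \<longleftrightarrow> W \<in> borel_measurable lebesgue \<and>
     integrable lebesgue (\<lambda>\<phi>. (Wsh \<phi> - W \<phi>)\<^sup>2)"

definition L2sq :: "(real \<Rightarrow> real) \<Rightarrow> real" where
  "L2sq W = (\<integral>\<phi>. (Wsh \<phi> - W \<phi>)\<^sup>2 \<partial>lebesgue)"

definition in_C :: "(real \<Rightarrow> real) \<Rightarrow> bool" where
  "in_C W \<longleftrightarrow> in_H W \<and>
     (\<exists>V::real \<Rightarrow> real. mono V \<and> (AE \<phi> in lebesgue. W \<phi> = V \<phi>) \<and>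
        (V \<longlongrightarrow> 1) at_top \<and> (V \<longlongrightarrow> -1) at_bot)"

definition in_C0 :: "(real \<Rightarrow> real) \<Rightarrow> bool" where
  "in_C0 W \<longleftrightarrow> in_C W \<and>
     (AE \<phi> in lebesgue. \<phi> \<ge> 0 \<longrightarrow> 0 \<le> W \<phi> \<and> W \<phi> \<le> 1) \<and>
     (AE \<phi> in lebesgue. \<phi> \<le> 0 \<longrightarrow> -1 \<le> W \<phi> \<and> W \<phi> \<le> 0)"

definition g_Phi :: "(real \<Rightarrow> real) \<Rightarrow> real \<Rightarrow> real" where
  "g_Phi dPhi w = integral {-1..w} (\<lambda>v. v - dPhi v)"

definition Lsharp :: "(real \<Rightarrow> real) \<Rightarrow> (real \<Rightarrow> real) \<Rightarrow> real" where
  "Lsharp dPhi W = (\<integral>\<phi>. g_Phi dPhi (W \<phi>) \<partial>lebesgue)"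

end

theory Submission
  imports Defs
begin

text \<open>Write \<open>g = g_Phi dPhi\<close>. Then \<open>g(\<plusminus>1) = g'(\<plusminus>1) = 0\<close> (for \<open>g(1)\<close> this is
  \<open>\<Phi>(-1) = \<Phi>(1)\<close>) and \<open>g'' = 1 - \<Phi>''\<close>. Comparing \<open>g\<close> with \<open>(c - w)\<^sup>2/2\<close> through the
  second derivative at an endpoint \<open>c = \<plusminus>1\<close> gives the upper bound since \<open>g'' \<le> 1\<close>; as
  \<open>g''(c) > 0\<close>, the same comparison gives a quadratic lower bound near \<open>c\<close>, and away
  from \<open>c\<close> positivity of \<open>g\<close> on a compact interval gives the rest. For \<open>W \<in> C\<^sub>0\<close>,
  \<open>W\<^sub>s\<^sub>h - W = c - W\<close> with \<open>c = sgn \<phi>\<close> and \<open>W(\<phi>)\<close> on the same side of \<open>0\<close> as \<open>c\<close>,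
  so the pointwise bounds integrate to the claim.\<close>

lemma DERIV_nonneg_imp_increasing_within:
  fixes f f' :: "real \<Rightarrow> real"
  assumes f: "\<And>x. x \<in> {a..b} \<Longrightarrow> (f has_real_derivative f' x) (at x within {a..b})"
    and f'_nonneg: "\<And>x. x \<in> {a..b} \<Longrightarrow> f' x \<ge> 0"
    and yz: "a \<le> y" "y \<le> z" "z \<le> b"
  shows "f y \<le> f z"
proof (rule DERIV_nonneg_imp_increasing_open[OF \<open>y \<le> z\<close>])
  fix x assume "y < x" "x < z"
  with yz have "a < x" "x < b" by auto
  then show "\<exists>d. (f has_real_derivative d) (at x) \<and> d \<ge> 0"
    using f[of x] f'_nonneg[of x] by (auto simp: at_within_Icc_at)
next
  show "continuous_on {y..z} f"
    using continuous_on_subset[OF DERIV_continuous_on[OF f]] yz by auto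
qed

lemma nonneg_if_double_zero_second_derivative_nonneg:
  fixes f f' f'' :: "real \<Rightarrow> real"
  assumes f: "\<And>x. x \<in> {a..b} \<Longrightarrow> (f has_real_derivative f' x) (at x within {a..b})"
    and f': "\<And>x. x \<in> {a..b} \<Longrightarrow> (f' has_real_derivative f'' x) (at x within {a..b})"
    and f''_nonneg: "\<And>x. x \<in> {a..b} \<Longrightarrow> f'' x \<ge> 0"
    and c: "c \<in> {a..b}" "f c = 0" "f' c = 0"
    and x: "x \<in> {a..b}"
  shows "f x \<ge> 0"
proof -
  have f'_mono: "f' y \<le> f' z" if "y \<in> {a..b}" "z \<in> {a..b}" "y \<le> z" for y z
    using DERIV_nonneg_imp_increasing_within[OF f' f''_nonneg] that by auto
  show ?thesis
  proof (cases "x \<le> c")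
    case True
    have "- f x \<le> - f c"
    proof (rule DERIV_nonneg_imp_increasing_within[where a = x and b = c and f = "\<lambda>y. - f y" and f' = "\<lambda>y. - f' y"])
      show "((\<lambda>y. - f y) has_real_derivative - f' y) (at y within {x..c})" if "y \<in> {x..c}" for y
      proof -
        have "{x..c} \<subseteq> {a..b}" using x c by auto
        then show ?thesis using DERIV_minus[OF DERIV_subset[OF f[of y]]] that by auto
      qed
      show "- f' y \<ge> 0" if "y \<in> {x..c}" for y
        using f'_mono[of y c] that x c by auto
    qed (use True in auto)
    then show ?thesis using c by simp
  next
    case False
    have "f c \<le> f x"
    proof (rule DERIV_nonneg_imp_increasing_within[where a = c and b = x and f = f and f' = f'])
      show "(f has_real_derivative f' y) (at y within {c..x})" if "y \<in> {c..x}" for y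
      proof -
        have "{c..x} \<subseteq> {a..b}" using x c by auto
        then show ?thesis using DERIV_subset[OF f[of y]] that by auto
      qed
      show "f' y \<ge> 0" if "y \<in> {c..x}" for y
        using f'_mono[of c y] that x c by auto
    qed (use False in auto)
    then show ?thesis using c by simp
  qed
qed

lemma half_square_le_if_second_derivative_ge:
  fixes f f' f'' :: "real \<Rightarrow> real"
  assumes f: "\<And>x. x \<in> {a..b} \<Longrightarrow> (f has_real_derivative f' x) (at x within {a..b})"
    and f': "\<And>x. x \<in> {a..b} \<Longrightarrow> (f' has_real_derivative f'' x) (at x within {a..b})"
    and f''_ge: "\<And>x. x \<in> {a..b} \<Longrightarrow> k \<le> f'' x"
    and c: "c \<in> {a..b}" "f c = 0" "f' c = 0"
    and x: "x \<in> {a..b}"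
  shows "k * (c - x)\<^sup>2 / 2 \<le> f x"
proof -
  have "0 \<le> f x - k * (c - x)\<^sup>2 / 2"
  proof (rule nonneg_if_double_zero_second_derivative_nonneg
      [where a = a and b = b and c = c and f = "\<lambda>y. f y - k * (c - y)\<^sup>2 / 2" and f' = "\<lambda>y. f' y - k * (y - c)" and f'' = "\<lambda>y. f'' y - k"])
    show "((\<lambda>y. f y - k * (c - y)\<^sup>2 / 2) has_real_derivative f' y - k * (y - c)) (at y within {a..b})"
      if "y \<in> {a..b}" for y
      using f[OF that] by (auto intro!: derivative_eq_intros simp: power2_eq_square field_simps)
    show "((\<lambda>y. f' y - k * (y - c)) has_real_derivative f'' y - k) (at y within {a..b})"
      if "y \<in> {a..b}" for y
      using f'[OF that] by (auto intro!: derivative_eq_intros)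
  qed (use f''_ge c x in auto)
  then show ?thesis by simp
qed

lemma square_lower_bound_if_local:
  fixes G :: "real \<Rightarrow> real"
  assumes S: "compact S" "continuous_on S G"
    and pos: "\<And>x. x \<in> S \<Longrightarrow> x \<noteq> c \<Longrightarrow> G x > 0"
    and local: "e > 0" "m > 0" "\<And>x. x \<in> S \<Longrightarrow> \<bar>c - x\<bar> < e \<Longrightarrow> m * (c - x)\<^sup>2 \<le> G x"
  shows "\<exists>k>0. \<forall>x\<in>S. k * (c - x)\<^sup>2 \<le> G x"
proof -
  define T where "T = S \<inter> {x. e \<le> \<bar>c - x\<bar>}"
  have T_sub: "T \<subseteq> S" and T_far: "\<And>x. x \<in> T \<Longrightarrow> (c - x)\<^sup>2 > 0"
    using \<open>e > 0\<close> by (auto simp: T_def)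
  show ?thesis
  proof (cases "T = {}")
    case True
    then have "\<forall>x\<in>S. m * (c - x)\<^sup>2 \<le> G x"
      using local(3) by (force simp: T_def)
    then show ?thesis using \<open>m > 0\<close> by blast
  next
    case False
    have "compact T"
      unfolding T_def by (intro compact_Int_closed S closed_Collect_le continuous_intros)
    moreover have "continuous_on T (\<lambda>x. G x / (c - x)\<^sup>2)"
      using continuous_on_subset[OF S(2) T_sub] T_far by (auto intro!: continuous_intros)
    ultimately obtain z where z: "z \<in> T" and z_min: "\<And>x. x \<in> T \<Longrightarrow> G z / (c - z)\<^sup>2 \<le> G x / (c - x)\<^sup>2"
      using continuous_attains_inf[OF _ False] by blast
    define \<mu> where "\<mu> = G z / (c - z)\<^sup>2"
    have "\<mu> > 0" using pos[of z] z T_sub T_far[OF z] by (auto simp: \<mu>_def)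
    have "min m \<mu> * (c - x)\<^sup>2 \<le> G x" if "x \<in> S" for x
    proof (cases "x \<in> T")
      case True
      have "min m \<mu> * (c - x)\<^sup>2 \<le> \<mu> * (c - x)\<^sup>2" by (simp add: mult_right_mono)
      also have "\<dots> \<le> G x" using z_min[OF True] T_far[OF True] by (simp add: \<mu>_def pos_le_divide_eq)
      finally show ?thesis .
    next
      case False
      then have "m * (c - x)\<^sup>2 \<le> G x" using local(3) that by (auto simp: T_def)
      moreover have "min m \<mu> * (c - x)\<^sup>2 \<le> m * (c - x)\<^sup>2" by (simp add: mult_right_mono)
      ultimately show ?thesis by linarith
    qed
    then show ?thesis using \<open>m > 0\<close> \<open>\<mu> > 0\<close> by (intro exI[of _ "min m \<mu>"]) auto
  qed
qed

lemma quadratic_bounds_at_double_zero: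
  fixes G G' G'' :: "real \<Rightarrow> real"
  assumes G: "\<And>x. x \<in> {a..b} \<Longrightarrow> (G has_real_derivative G' x) (at x within {a..b})"
    and G': "\<And>x. x \<in> {a..b} \<Longrightarrow> (G' has_real_derivative G'' x) (at x within {a..b})"
    and G''_cont: "continuous_on {a..b} G''"
    and G''_le_1: "\<And>x. x \<in> {a..b} \<Longrightarrow> G'' x \<le> 1"
    and c: "c \<in> {a..b}" "G c = 0" "G' c = 0" "G'' c > 0"
    and pos: "\<And>x. x \<in> {a..b} \<Longrightarrow> x \<noteq> c \<Longrightarrow> G x > 0"
  shows "\<exists>k>0. \<forall>x\<in>{a..b}. k * (c - x)\<^sup>2 \<le> G x \<and> G x \<le> (c - x)\<^sup>2 / 2"
proof -
  have upper: "G x \<le> (c - x)\<^sup>2 / 2" if "x \<in> {a..b}" for x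
    using half_square_le_if_second_derivative_ge[where f = "\<lambda>y. - G y" and f' = "\<lambda>y. - G' y"
        and f'' = "\<lambda>y. - G'' y" and k = "-1", OF DERIV_minus[OF G] DERIV_minus[OF G'] _ c(1) _ _ that]
      G''_le_1 c by auto
  obtain d where "d > 0" and d: "\<And>x. x \<in> {a..b} \<Longrightarrow> dist x c < d \<Longrightarrow> dist (G'' x) (G'' c) < G'' c / 2"
    using G''_cont c unfolding continuous_on_iff by (metis half_gt_zero)
  define I where "I = {max a (c - d/2)..min b (c + d/2)}"
  have I_sub: "I \<subseteq> {a..b}" and c_I: "c \<in> I" using c \<open>d > 0\<close> by (auto simp: I_def)
  have near: "G'' c / 2 * (c - x)\<^sup>2 / 2 \<le> G x" if "x \<in> I" for x
  proof (rule half_square_le_if_second_derivative_ge[where a = "max a (c - d/2)" and b = "min b (c + d/2)" and c = c])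
    show "(G has_real_derivative G' y) (at y within {max a (c - d/2)..min b (c + d/2)})"
      if "y \<in> {max a (c - d/2)..min b (c + d/2)}" for y
      using DERIV_subset[OF G] I_sub that unfolding I_def by blast
    show "(G' has_real_derivative G'' y) (at y within {max a (c - d/2)..min b (c + d/2)})"
      if "y \<in> {max a (c - d/2)..min b (c + d/2)}" for y
      using DERIV_subset[OF G'] I_sub that unfolding I_def by blast
    show "G'' c / 2 \<le> G'' y" if "y \<in> {max a (c - d/2)..min b (c + d/2)}" for y
    proof -
      have "dist (G'' y) (G'' c) < G'' c / 2"
        using d[of y] that \<open>d > 0\<close> I_sub unfolding I_def by (auto simp: dist_real_def abs_less_iff)
      then show ?thesis unfolding dist_real_def by linarith
    qed
  qed (use c c_I that in \<open>auto simp: I_def\<close>)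
  have "\<exists>k>0. \<forall>x\<in>{a..b}. k * (c - x)\<^sup>2 \<le> G x"
  proof (rule square_lower_bound_if_local[where e = "d/2" and m = "G'' c / 4"])
    show "continuous_on {a..b} G" using G by (rule DERIV_continuous_on)
    show "G'' c / 4 * (c - x)\<^sup>2 \<le> G x" if "x \<in> {a..b}" "\<bar>c - x\<bar> < d/2" for x
    proof -
      have "x \<in> I" using that unfolding I_def atLeastAtMost_iff by linarith
      then show ?thesis using near[of x] by simp
    qed
  qed (use pos \<open>d > 0\<close> c in auto)
  then show ?thesis using upper by blast
qed

lemma has_real_derivative_g_Phi:
  assumes "continuous_on {-1..1} dPhi" "x \<in> {-1..1}"
  shows "(g_Phi dPhi has_real_derivative x - dPhi x) (at x within {-1..1})"
proof -
  have "g_Phi dPhi = (\<lambda>w. integral {-1..w} (\<lambda>v. v - dPhi v))"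
    by (simp add: g_Phi_def fun_eq_iff)
  then show ?thesis
    using integral_has_real_derivative[of "-1" 1 "\<lambda>v. v - dPhi v"] assms
    by (simp add: continuous_on_diff continuous_on_id)
qed

lemma g_Phi_one_eq_0:
  assumes Phi: "\<And>x. x \<in> {-1..1} \<Longrightarrow> (Phi has_real_derivative dPhi x) (at x within {-1..1})"
    and Phi_eq: "Phi (-1) = Phi 1"
  shows "g_Phi dPhi 1 = 0"
proof -
  have "((\<lambda>v. v - dPhi v) has_integral ((1\<^sup>2 / 2 - Phi 1) - ((-1)\<^sup>2 / 2 - Phi (-1)))) {-1..1::real}"
  proof (rule fundamental_theorem_of_calculus)
    show "((\<lambda>v. v\<^sup>2 / 2 - Phi v) has_vector_derivative x - dPhi x) (at x within {-1..1})"
      if "x \<in> {-1..1}" for x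
      using Phi[OF that] unfolding has_real_derivative_iff_has_vector_derivative[symmetric]
      by (auto intro!: derivative_eq_intros)
  qed simp
  then show ?thesis
    unfolding g_Phi_def using Phi_eq by (simp add: integral_unique)
qed

lemma g_Phi_quadratic_bounds:
  fixes Phi dPhi ddPhi :: "real \<Rightarrow> real"
  assumes Phi: "\<And>x. x \<in> {-1..1} \<Longrightarrow> (Phi has_real_derivative dPhi x) (at x within {-1..1})"
    and dPhi: "\<And>x. x \<in> {-1..1} \<Longrightarrow> (dPhi has_real_derivative ddPhi x) (at x within {-1..1})"
    and ddPhi_cont: "continuous_on {-1..1} ddPhi"
    and dPhi_ends: "dPhi (-1) = -1" "dPhi 1 = 1"
    and ddPhi_nonneg: "\<And>x. x \<in> {-1..1} \<Longrightarrow> ddPhi x \<ge> 0"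
    and Phi_eq: "Phi (-1) = Phi 1"
    and ddPhi_ends: "ddPhi (-1) < 1" "ddPhi 1 < 1"
    and g_pos: "\<And>w. w \<in> {-1<..<1} \<Longrightarrow> g_Phi dPhi w > 0"
  shows "\<exists>k>0. \<forall>w\<in>{-1..1}. \<forall>c\<in>{-1,1}. 0 \<le> c * w \<longrightarrow>
           k * (c - w)\<^sup>2 \<le> g_Phi dPhi w \<and> g_Phi dPhi w \<le> (c - w)\<^sup>2 / 2"
proof -
  have g: "(g_Phi dPhi has_real_derivative x - dPhi x) (at x within {-1..1})" if "x \<in> {-1..1}" for x
    using has_real_derivative_g_Phi[OF DERIV_continuous_on[OF dPhi] that] .
  have g': "((\<lambda>x. x - dPhi x) has_real_derivative 1 - ddPhi x) (at x within {-1..1})"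
    if "x \<in> {-1..1}" for x
    using dPhi[OF that] by (auto intro!: derivative_eq_intros)
  have g_ends: "g_Phi dPhi c = 0" if "c \<in> {-1, 1}" for c
    using that g_Phi_one_eq_0[OF Phi Phi_eq] by (auto simp: g_Phi_def)
  have bounds_on: "\<exists>k>0. \<forall>x\<in>{a..b}. k * (c - x)\<^sup>2 \<le> g_Phi dPhi x \<and> g_Phi dPhi x \<le> (c - x)\<^sup>2 / 2"
    if sub: "{a..b} \<subseteq> {-1..1}" and c: "c \<in> {a..b}" "c \<in> {-1, 1}"
      and inner: "\<And>x. x \<in> {a..b} \<Longrightarrow> x \<noteq> c \<Longrightarrow> x \<in> {-1<..<1}" for a b c
  proof (rule quadratic_bounds_at_double_zero[where G' = "\<lambda>x. x - dPhi x" and G'' = "\<lambda>x. 1 - ddPhi x"])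
    show "(g_Phi dPhi has_real_derivative x - dPhi x) (at x within {a..b})" if "x \<in> {a..b}" for x
      using DERIV_subset[OF g sub] sub that by blast
    show "((\<lambda>x. x - dPhi x) has_real_derivative 1 - ddPhi x) (at x within {a..b})" if "x \<in> {a..b}" for x
      using DERIV_subset[OF g' sub] sub that by blast
    show "continuous_on {a..b} (\<lambda>x. 1 - ddPhi x)"
      using continuous_on_subset[OF ddPhi_cont sub] by (intro continuous_intros)
  qed (use that g_ends dPhi_ends ddPhi_ends ddPhi_nonneg g_pos in auto)
  obtain kR where "kR > 0"
    and kR: "\<And>x. x \<in> {0..1} \<Longrightarrow> kR * (1 - x)\<^sup>2 \<le> g_Phi dPhi x \<and> g_Phi dPhi x \<le> (1 - x)\<^sup>2 / 2"
    using bounds_on[of 0 1 1] by auto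
  obtain kL where "kL > 0"
    and kL: "\<And>x. x \<in> {-1..0} \<Longrightarrow> kL * (-1 - x)\<^sup>2 \<le> g_Phi dPhi x \<and> g_Phi dPhi x \<le> (-1 - x)\<^sup>2 / 2"
    using bounds_on[of "-1" 0 "-1"] by auto
  have "min kR kL * (c - w)\<^sup>2 \<le> g_Phi dPhi w \<and> g_Phi dPhi w \<le> (c - w)\<^sup>2 / 2"
    if "w \<in> {-1..1}" "c \<in> {-1, 1}" "0 \<le> c * w" for w c
  proof -
    have "min kR kL * (c - w)\<^sup>2 \<le> kR * (c - w)\<^sup>2" "min kR kL * (c - w)\<^sup>2 \<le> kL * (c - w)\<^sup>2"
      by (simp_all add: mult_right_mono)
    then show ?thesis using that kR[of w] kL[of w] by auto
  qed
  then show ?thesis using \<open>kR > 0\<close> \<open>kL > 0\<close> by (intro exI[of _ "min kR kL"]) auto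
qed

lemma integral_between_multiples:
  fixes f h :: "'a \<Rightarrow> real"
  assumes f: "integrable M f" and h: "h \<in> borel_measurable M"
    and between: "AE x in M. k * f x \<le> h x \<and> h x \<le> K * f x"
  shows "k * (\<integral>x. f x \<partial>M) \<le> (\<integral>x. h x \<partial>M) \<and> (\<integral>x. h x \<partial>M) \<le> K * (\<integral>x. f x \<partial>M)"
proof -
  have h_bound: "AE x in M. norm (h x) \<le> norm ((\<bar>k\<bar> + \<bar>K\<bar>) * \<bar>f x\<bar>)"
    using between
  proof eventually_elim
    case (elim x)
    then have "\<bar>h x\<bar> \<le> max \<bar>k * f x\<bar> \<bar>K * f x\<bar>" by linarith
    also have "\<dots> \<le> (\<bar>k\<bar> + \<bar>K\<bar>) * \<bar>f x\<bar>" by (simp add: abs_mult distrib_right)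
    finally show ?case by simp
  qed
  have "integrable M (\<lambda>x. (\<bar>k\<bar> + \<bar>K\<bar>) * \<bar>f x\<bar>)"
    using f by auto
  from Bochner_Integration.integrable_bound[OF this h h_bound]
  have h_int: "integrable M h" .
  have "(\<integral>x. k * f x \<partial>M) \<le> (\<integral>x. h x \<partial>M)"
    using between by (intro integral_mono_AE[OF _ h_int]) (auto simp: f elim: AE_mp)
  moreover have "(\<integral>x. h x \<partial>M) \<le> (\<integral>x. K * f x \<partial>M)"
    using between by (intro integral_mono_AE[OF h_int]) (auto simp: f elim: AE_mp)
  ultimately show ?thesis by simp
qed

lemma borel_measurable_comp_continuous_on_Icc:
  fixes g W :: "real \<Rightarrow> real"
  assumes g: "continuous_on {a..b} g" and "a \<le> b"
    and W: "W \<in> borel_measurable lebesgue" and W_range: "AE x in lebesgue. W x \<in> {a..b}"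
  shows "(\<lambda>x. g (W x)) \<in> borel_measurable lebesgue"
proof (rule borel_measurable_AE)
  \<comment> \<open>\<open>g\<close> is only continuous on \<open>{a..b}\<close>, so compose with the clamped \<open>W\<close>.\<close>
  have "continuous_on UNIV (\<lambda>y. g (max a (min b y)))"
    using \<open>a \<le> b\<close> by (intro continuous_on_compose2[OF g]) (auto intro!: continuous_intros)
  then show "(\<lambda>x. g (max a (min b (W x)))) \<in> borel_measurable lebesgue"
    using W by (rule borel_measurable_continuous_on)
  show "AE x in lebesgue. g (max a (min b (W x))) = g (W x)"
    using W_range by eventually_elim auto
qed

lemma in_C0_AE_range:
  assumes "in_C0 W"
  shows "AE \<phi> in lebesgue. Wsh \<phi> \<in> {-1, 1} \<and> W \<phi> \<in> {-1..1} \<and> 0 \<le> Wsh \<phi> * W \<phi>"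
proof -
  have "AE \<phi> in lebesgue. \<phi> \<noteq> (0::real)"
    by (rule AE_completion[OF AE_lborel_singleton])
  moreover have "AE \<phi> in lebesgue. \<phi> \<ge> 0 \<longrightarrow> 0 \<le> W \<phi> \<and> W \<phi> \<le> 1"
    and "AE \<phi> in lebesgue. \<phi> \<le> 0 \<longrightarrow> -1 \<le> W \<phi> \<and> W \<phi> \<le> 0"
    using assms unfolding in_C0_def by auto
  ultimately show ?thesis
    by eventually_elim (auto simp: Wsh_def sgn_if)
qed

theorem lemma3p12:
  fixes Phi dPhi ddPhi :: "real \<Rightarrow> real"
  assumes d1: "\<And>x. x \<in> {-1..1} \<Longrightarrow> (Phi has_real_derivative dPhi x) (at x within {-1..1})"
    and d2: "\<And>x. x \<in> {-1..1} \<Longrightarrow> (dPhi has_real_derivative ddPhi x) (at x within {-1..1})"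
    and cont: "continuous_on {-1..1} ddPhi"
    and bl: "dPhi (-1) = -1" and br: "dPhi 1 = 1"
    and convex: "\<And>x. x \<in> {-1..1} \<Longrightarrow> ddPhi x \<ge> 0"
    and eq: "Phi (-1) = Phi 1"
    and sl: "ddPhi (-1) < 1" and sr: "ddPhi 1 < 1"
    and gpos: "\<And>w. w \<in> {-1<..<1} \<Longrightarrow> g_Phi dPhi w > 0"
  shows "\<exists>cl cu::real. cl > 0 \<and> cu > 0 \<and>
           (\<forall>W. in_C0 W \<longrightarrow> cl * L2sq W \<le> Lsharp dPhi W \<and> Lsharp dPhi W \<le> cu * L2sq W)"
proof -
  obtain k where "k > 0" and g_bounds: "\<And>w c. w \<in> {-1..1} \<Longrightarrow> c \<in> {-1, 1} \<Longrightarrow> 0 \<le> c * w \<Longrightarrow>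
      k * (c - w)\<^sup>2 \<le> g_Phi dPhi w \<and> g_Phi dPhi w \<le> (c - w)\<^sup>2 / 2"
    using g_Phi_quadratic_bounds[OF assms] by blast
  have g_cont: "continuous_on {-1..1} (g_Phi dPhi)"
    using has_real_derivative_g_Phi[OF DERIV_continuous_on[OF d2]] by (rule DERIV_continuous_on)
  have "k * L2sq W \<le> Lsharp dPhi W \<and> Lsharp dPhi W \<le> 1/2 * L2sq W" if W: "in_C0 W" for W
  proof -
    have W_H: "W \<in> borel_measurable lebesgue" "integrable lebesgue (\<lambda>\<phi>. (Wsh \<phi> - W \<phi>)\<^sup>2)"
      using W unfolding in_C0_def in_C_def in_H_def by auto
    have between: "AE \<phi> in lebesgue. k * (Wsh \<phi> - W \<phi>)\<^sup>2 \<le> g_Phi dPhi (W \<phi>) \<and>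
        g_Phi dPhi (W \<phi>) \<le> 1/2 * (Wsh \<phi> - W \<phi>)\<^sup>2"
      using in_C0_AE_range[OF W] by eventually_elim (use g_bounds in auto)
    have "(\<lambda>\<phi>. g_Phi dPhi (W \<phi>)) \<in> borel_measurable lebesgue"
      using in_C0_AE_range[OF W]
      by (intro borel_measurable_comp_continuous_on_Icc[OF g_cont _ W_H(1)]) (auto elim: AE_mp)
    from integral_between_multiples[OF W_H(2) this between] show ?thesis
      unfolding L2sq_def Lsharp_def .
  qed
  then show ?thesis using \<open>k > 0\<close> by (intro exI[of _ k] exI[of _ "1/2"]) auto
qed

end
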